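(* Under the standing assumptions, suppose that $V_R(V_R(R^{\beta_H}))=R^{\beta_H}$ for every wide subgroupoid $H$ of $\mathcal G$. Consider, on the set of wide subgroupoids of $\mathcal G$, the Galois map $\theta(H)=R^{\beta_H}$ and the map $\gamma(H)=\bigoplus_{h\in H}J_h$. Then $\theta$ is injective if and only if $\gamma$ is injective.
   Context: All rings and algebras are associative and unital. A groupoid is a nonempty set $\mathcal G$ with a partially defined associative multiplication in which every $g$ has an inverse $g^{-1}$, a left identity $r(g)=gg^{-1}$ and a right identity $d(g)=g^{-1}g$; $gh$ is defined iff $d(g)=r(h)$; $\mathcal G_0$ is the set of identities. A subgroupoid is a nonempty subset closed under inverses and defined products; it is wide if it contains $\mathcal G_0$. Standing assumptions: $K$ commutative ring, $R$ a $K$-algebra, $\mathcal G$ a finite groupoid, $\beta=(\{E_g\},\{\beta_g\})$ a unital action of $\mathcal G$ on $R$: $E_g=E_{r(g)}$ is an ideal of $R$, unital with identity $1_g$ (so $1_{g^{-1}}=1_{d(g)}$), $\beta_g:E_{g^{-1}}\to E_g$ a $K$-algebra isomorphism, $\beta_e=\mathrm{id}_{E_e}$ for $e\in\mathcal G_0$, $\beta_g\beta_h(x)=\beta_{gh}(x)$ whenever $d(g)=r(h)$, $x\in E_{h^{-1}}$; $R=\bigoplus_{e\in\mathcal G_0}E_e$; and $R$ is a $\beta$-Galois extension of $R^\beta$: there exist $x_i,y_i\in R$ ($1\le i\le m$) with $\sum_i x_i\beta_g(y_i1_{g^{-1}})=1_g$ if $g\in\mathcal G_0$ and $=0$ otherwise.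 For a subgroupoid $H$, $R^{\beta_H}=\{r\in R:\beta_h(r1_{h^{-1}})=r1_h\ \forall h\in H\}$. $V_R(S)=\{r\in R: rs=sr\ \forall s\in S\}$. For $g\in\mathcal G$, $J_g=\{r\in E_g: r\beta_g(x1_{g^{-1}})=xr\ \forall x\in R\}$. *)

theory Defs
  imports Main
begin

text \<open>A groupoid is given by a carrier set G, a (total, but only meaningful where
defined) multiplication and an inversion. d(g) = g^{-1} g, r(g) = g g^{-1};
gh is defined iff d(g) = r(h).\<close>

definition gdom :: "('g \<Rightarrow> 'g \<Rightarrow> 'g) \<Rightarrow> ('g \<Rightarrow> 'g) \<Rightarrow> 'g \<Rightarrow> 'g" where
  "gdom mult ginv g = mult (ginv g) g"

definition gran :: "('g \<Rightarrow> 'g \<Rightarrow> 'g) \<Rightarrow> ('g \<Rightarrow> 'g) \<Rightarrow> 'g \<Rightarrow> 'g" where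
  "gran mult ginv g = mult g (ginv g)"

definition groupoid :: "'g set \<Rightarrow> ('g \<Rightarrow> 'g \<Rightarrow> 'g) \<Rightarrow> ('g \<Rightarrow> 'g) \<Rightarrow> bool" where
  "groupoid G mult ginv \<longleftrightarrow>
     G \<noteq> {} \<and>
     (\<forall>g\<in>G. ginv g \<in> G \<and> ginv (ginv g) = g) \<and>
     (\<forall>g\<in>G. \<forall>h\<in>G. gdom mult ginv g = gran mult ginv h \<longrightarrow>
        mult g h \<in> G \<and> gdom mult ginv (mult g h) = gdom mult ginv h \<and>
        gran mult ginv (mult g h) = gran mult ginv g) \<and>
     (\<forall>g\<in>G. \<forall>h\<in>G. \<forall>l\<in>G. gdom mult ginv g = gran mult ginv h \<and> gdom mult ginv h = gran mult ginv l
        \<longrightarrow> mult (mult g h) l = mult g (mult h l)) \<and>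
     (\<forall>g\<in>G. mult (gran mult ginv g) g = g \<and> mult g (gdom mult ginv g) = g)"

definition gidents :: "'g set \<Rightarrow> ('g \<Rightarrow> 'g \<Rightarrow> 'g) \<Rightarrow> ('g \<Rightarrow> 'g) \<Rightarrow> 'g set" where
  "gidents G mult ginv = gdom mult ginv ` G"

definition subgroupoid :: "'g set \<Rightarrow> ('g \<Rightarrow> 'g \<Rightarrow> 'g) \<Rightarrow> ('g \<Rightarrow> 'g) \<Rightarrow> 'g set \<Rightarrow> bool" where
  "subgroupoid G mult ginv H \<longleftrightarrow>
     H \<noteq> {} \<and> H \<subseteq> G \<and> (\<forall>h\<in>H. ginv h \<in> H) \<and>
     (\<forall>g\<in>H. \<forall>h\<in>H. gdom mult ginv g = gran mult ginv h \<longrightarrow> mult g h \<in> H)"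

definition wide_subgroupoid :: "'g set \<Rightarrow> ('g \<Rightarrow> 'g \<Rightarrow> 'g) \<Rightarrow> ('g \<Rightarrow> 'g) \<Rightarrow> 'g set \<Rightarrow> bool" where
  "wide_subgroupoid G mult ginv H \<longleftrightarrow>
     subgroupoid G mult ginv H \<and> gidents G mult ginv \<subseteq> H"

definition kalgebra :: "('k::comm_ring_1 \<Rightarrow> 'r::ring_1 \<Rightarrow> 'r) \<Rightarrow> bool" where
  "kalgebra smult \<longleftrightarrow>
     (\<forall>a x y. smult a (x + y) = smult a x + smult a y) \<and>
     (\<forall>a b x. smult (a + b) x = smult a x + smult b x) \<and>
     (\<forall>a b x. smult (a * b) x = smult a (smult b x)) \<and>
     (\<forall>x. smult 1 x = x) \<and>
     (\<forall>a x y. smult a (x * y) = smult a x * y \<and> smult a (x * y) = x * smult a y)"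

definition two_sided_ideal :: "'r::ring_1 set \<Rightarrow> bool" where
  "two_sided_ideal I \<longleftrightarrow> 0 \<in> I \<and> (\<forall>x\<in>I. \<forall>y\<in>I. x + y \<in> I) \<and> (\<forall>x\<in>I. - x \<in> I) \<and>
     (\<forall>x\<in>I. \<forall>r. r * x \<in> I \<and> x * r \<in> I)"

definition unital_with :: "'r::ring_1 set \<Rightarrow> 'r \<Rightarrow> bool" where
  "unital_with I u \<longleftrightarrow> u \<in> I \<and> (\<forall>x\<in>I. u * x = x \<and> x * u = x)"

definition kalg_iso :: "('k::comm_ring_1 \<Rightarrow> 'r::ring_1 \<Rightarrow> 'r) \<Rightarrow> ('r \<Rightarrow> 'r) \<Rightarrow> 'r set \<Rightarrow> 'r set \<Rightarrow> bool" where
  "kalg_iso smult f A B \<longleftrightarrow> bij_betw f A B \<and>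
     (\<forall>x\<in>A. \<forall>y\<in>A. f (x + y) = f x + f y \<and> f (x * y) = f x * f y) \<and>
     (\<forall>a. \<forall>x\<in>A. f (smult a x) = smult a (f x))"

definition unital_action ::
  "'g set \<Rightarrow> ('g \<Rightarrow> 'g \<Rightarrow> 'g) \<Rightarrow> ('g \<Rightarrow> 'g) \<Rightarrow> ('k::comm_ring_1 \<Rightarrow> 'r::ring_1 \<Rightarrow> 'r)
    \<Rightarrow> ('g \<Rightarrow> 'r set) \<Rightarrow> ('g \<Rightarrow> 'r) \<Rightarrow> ('g \<Rightarrow> 'r \<Rightarrow> 'r) \<Rightarrow> bool" where
  "unital_action G mult ginv smult E one \<beta> \<longleftrightarrow>
     (\<forall>g\<in>G. E g = E (gran mult ginv g)) \<and>
     (\<forall>g\<in>G. two_sided_ideal (E g) \<and> unital_with (E g) (one g)) \<and>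
     (\<forall>g\<in>G. kalg_iso smult (\<beta> g) (E (ginv g)) (E g)) \<and>
     (\<forall>e\<in>gidents G mult ginv. \<forall>x\<in>E e. \<beta> e x = x) \<and>
     (\<forall>g\<in>G. \<forall>h\<in>G. gdom mult ginv g = gran mult ginv h \<longrightarrow>
        (\<forall>x\<in>E (ginv h). \<beta> g (\<beta> h x) = \<beta> (mult g h) x)) \<and>
     (\<forall>x::'r. \<exists>!f. (\<forall>e\<in>gidents G mult ginv. f e \<in> E e) \<and>
        (\<forall>e. e \<notin> gidents G mult ginv \<longrightarrow> f e = 0) \<and> x = sum f (gidents G mult ginv))"

definition galois_ext ::
  "'g set \<Rightarrow> ('g \<Rightarrow> 'g \<Rightarrow> 'g) \<Rightarrow> ('g \<Rightarrow> 'g) \<Rightarrow> ('g \<Rightarrow> 'r::ring_1) \<Rightarrow> ('g \<Rightarrow> 'r \<Rightarrow> 'r) \<Rightarrow> bool" where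
  "galois_ext G mult ginv one \<beta> \<longleftrightarrow>
     (\<exists>(m::nat) x y. \<forall>g\<in>G.
        (\<Sum>i<m. x i * \<beta> g (y i * one (ginv g))) =
          (if g \<in> gidents G mult ginv then one g else 0))"

definition fixring :: "('g \<Rightarrow> 'g) \<Rightarrow> ('g \<Rightarrow> 'r::ring_1) \<Rightarrow> ('g \<Rightarrow> 'r \<Rightarrow> 'r) \<Rightarrow> 'g set \<Rightarrow> 'r set" where
  "fixring ginv one \<beta> H = {r. \<forall>h\<in>H. \<beta> h (r * one (ginv h)) = r * one h}"

definition centralizer :: "'r::ring_1 set \<Rightarrow> 'r set" where
  "centralizer S = {r. \<forall>s\<in>S. r * s = s * r}"

definition Jset :: "('g \<Rightarrow> 'g) \<Rightarrow> ('g \<Rightarrow> 'r set) \<Rightarrow> ('g \<Rightarrow> 'r::ring_1) \<Rightarrow> ('g \<Rightarrow> 'r \<Rightarrow> 'r) \<Rightarrow> 'g \<Rightarrow> 'r set" where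
  "Jset ginv E one \<beta> g = {r \<in> E g. \<forall>x. r * \<beta> g (x * one (ginv g)) = x * r}"

definition gammaJ :: "('g \<Rightarrow> 'g) \<Rightarrow> ('g \<Rightarrow> 'r set) \<Rightarrow> ('g \<Rightarrow> 'r::ring_1) \<Rightarrow> ('g \<Rightarrow> 'r \<Rightarrow> 'r) \<Rightarrow> 'g set \<Rightarrow> 'r set" where
  "gammaJ ginv E one \<beta> H = {sum f H | f. \<forall>h\<in>H. f h \<in> Jset ginv E one \<beta> h}"

end

theory Submission
  imports Defs
begin

text \<open>For a wide subgroupoid H the centralizer of \<open>R^(\<beta>_H)\<close> is exactly \<open>\<gamma>(H)\<close>.
  Elements of \<open>J_h\<close> commute with H-invariants by the very definition of \<open>J_h\<close>. Conversely,
  with the Galois coordinates \<open>x_j, y_j\<close>, an element v of the centralizer splits as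
  \<open>v = \<Sum>h\<in>H. \<Sum>j. x_j v \<beta>_h(y_j 1_(h\<inverse>))\<close>, because \<open>\<Sum>j. x_j tr_H(y_j) = 1\<close> and traces
  are invariant; each summand lies in \<open>J_h\<close> because v commutes with all traces \<open>tr_G(a)\<close>
  and the coordinates form a dual basis for the trace form. Hence \<open>\<gamma>(H) = V(\<theta>(H))\<close>, and by
  the double centralizer hypothesis \<open>\<theta>(H) = V(\<gamma>(H))\<close>, so each of \<open>\<theta>\<close> and \<open>\<gamma>\<close> determines
  the other and they are injective together.\<close>

locale groupoid_struct =
  fixes G :: "'g set" and mult :: "'g \<Rightarrow> 'g \<Rightarrow> 'g" and ginv :: "'g \<Rightarrow> 'g"
  assumes groupoid: "groupoid G mult ginv"
begin

abbreviation src :: "'g \<Rightarrow> 'g" where "src \<equiv> gdom mult ginv"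
abbreviation tgt :: "'g \<Rightarrow> 'g" where "tgt \<equiv> gran mult ginv"
abbreviation G0 :: "'g set" where "G0 \<equiv> gidents G mult ginv"

lemma inv_closed: "g \<in> G \<Longrightarrow> ginv g \<in> G"
  using groupoid unfolding groupoid_def by blast

lemma inv_inv [simp]: "g \<in> G \<Longrightarrow> ginv (ginv g) = g"
  using groupoid unfolding groupoid_def by blast

lemma mult_closed: "g \<in> G \<Longrightarrow> h \<in> G \<Longrightarrow> src g = tgt h \<Longrightarrow> mult g h \<in> G"
  using groupoid unfolding groupoid_def by blast

lemma src_mult: "g \<in> G \<Longrightarrow> h \<in> G \<Longrightarrow> src g = tgt h \<Longrightarrow> src (mult g h) = src h"
  using groupoid unfolding groupoid_def by blast

lemma tgt_mult: "g \<in> G \<Longrightarrow> h \<in> G \<Longrightarrow> src g = tgt h \<Longrightarrow> tgt (mult g h) = tgt g"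
  using groupoid unfolding groupoid_def by blast

lemma mult_assoc:
  "g \<in> G \<Longrightarrow> h \<in> G \<Longrightarrow> l \<in> G \<Longrightarrow> src g = tgt h \<Longrightarrow> src h = tgt l \<Longrightarrow>
    mult (mult g h) l = mult g (mult h l)"
  using groupoid unfolding groupoid_def by blast

lemma tgt_mult_left: "g \<in> G \<Longrightarrow> mult (tgt g) g = g"
  using groupoid unfolding groupoid_def by blast

lemma tgt_inv: "g \<in> G \<Longrightarrow> tgt (ginv g) = src g"
  by (simp add: gran_def gdom_def)

lemma src_inv: "g \<in> G \<Longrightarrow> src (ginv g) = tgt g"
  by (simp add: gran_def gdom_def)

lemma src_closed: "g \<in> G \<Longrightarrow> src g \<in> G"
  by (metis src_inv gdom_def inv_closed mult_closed)

lemma tgt_closed: "g \<in> G \<Longrightarrow> tgt g \<in> G"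
  by (metis src_closed src_inv inv_closed)

lemma src_src: "g \<in> G \<Longrightarrow> src (src g) = src g"
  by (metis src_inv src_mult gdom_def inv_closed)

lemma tgt_src: "g \<in> G \<Longrightarrow> tgt (src g) = src g"
  by (metis src_inv gdom_def inv_closed tgt_inv tgt_mult)

lemma src_in_idents: "g \<in> G \<Longrightarrow> src g \<in> G0"
  by (auto simp: gidents_def)

lemma tgt_in_idents: "g \<in> G \<Longrightarrow> tgt g \<in> G0"
  by (metis src_in_idents src_inv inv_closed)

lemma idents_subset: "G0 \<subseteq> G"
  using src_closed by (auto simp: gidents_def)

lemma src_ident: "e \<in> G0 \<Longrightarrow> src e = e"
  using src_src by (auto simp: gidents_def)

lemma tgt_ident: "e \<in> G0 \<Longrightarrow> tgt e = e"
  using tgt_src by (auto simp: gidents_def)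

lemma inv_ident: assumes e: "e \<in> G0" shows "ginv e = e"
proof -
  have eG: "e \<in> G" using e idents_subset by blast
  have "ginv e = mult (ginv e) (src (ginv e))"
    using groupoid inv_closed[OF eG] unfolding groupoid_def by metis
  also have "src (ginv e) = e" using src_inv[OF eG] tgt_ident[OF e] by simp
  also have "mult (ginv e) e = e" using src_ident[OF e] by (simp add: gdom_def)
  finally show ?thesis .
qed

lemma inv_in_idents_iff: "g \<in> G \<Longrightarrow> ginv g \<in> G0 \<longleftrightarrow> g \<in> G0"
  by (metis inv_ident inv_inv)

lemma subgroupoid_carrier: "subgroupoid G mult ginv G"
  using groupoid inv_closed mult_closed unfolding subgroupoid_def groupoid_def by blast

lemma mult_inv_cancel_left:
  assumes h: "h \<in> G" and k: "k \<in> G" and "tgt k = tgt h"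
  shows "mult h (mult (ginv h) k) = k"
proof -
  have "mult h (mult (ginv h) k) = mult (mult h (ginv h)) k"
    using mult_assoc[of h "ginv h" k] assms inv_closed tgt_inv src_inv by simp
  also have "\<dots> = k" using tgt_mult_left[OF k] assms by (simp add: gran_def)
  finally show ?thesis .
qed

lemma inv_mult_cancel_left:
  assumes h: "h \<in> G" and g: "g \<in> G" and "src h = tgt g"
  shows "mult (ginv h) (mult h g) = g"
proof -
  have "mult (ginv h) (mult h g) = mult (mult (ginv h) h) g"
    using mult_assoc[of "ginv h" h g] assms inv_closed tgt_inv src_inv by simp
  also have "\<dots> = g" using tgt_mult_left[OF g] assms by (simp add: gdom_def)
  finally show ?thesis .
qed

lemma bij_betw_mult_left:
  assumes H: "subgroupoid G mult ginv H" and k: "k \<in> H"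
  shows "bij_betw (mult k) {h\<in>H. tgt h = src k} {l\<in>H. tgt l = tgt k}"
proof (rule bij_betw_byWitness[where f' = "mult (ginv k)"])
  have HG: "H \<subseteq> G" and Hinv: "\<And>h. h \<in> H \<Longrightarrow> ginv h \<in> H"
    and Hmult: "\<And>g h. g \<in> H \<Longrightarrow> h \<in> H \<Longrightarrow> src g = tgt h \<Longrightarrow> mult g h \<in> H"
    using H unfolding subgroupoid_def by blast+
  have kG: "k \<in> G" using k HG by blast
  show "\<forall>h\<in>{h\<in>H. tgt h = src k}. mult (ginv k) (mult k h) = h"
    using inv_mult_cancel_left[OF kG] HG by auto
  show "\<forall>l\<in>{l\<in>H. tgt l = tgt k}. mult k (mult (ginv k) l) = l"
    using mult_inv_cancel_left[OF kG] HG by auto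
  show "mult k ` {h\<in>H. tgt h = src k} \<subseteq> {l\<in>H. tgt l = tgt k}"
    using Hmult[OF k] tgt_mult[OF kG] HG by auto
  show "mult (ginv k) ` {l\<in>H. tgt l = tgt k} \<subseteq> {h\<in>H. tgt h = src k}"
    using Hmult[OF Hinv[OF k]] tgt_mult[OF inv_closed[OF kG]] src_inv[OF kG] tgt_inv[OF kG] HG
    by auto
qed

end

locale unital_groupoid_action = groupoid_struct G mult ginv
  for G :: "'g set" and mult :: "'g \<Rightarrow> 'g \<Rightarrow> 'g" and ginv :: "'g \<Rightarrow> 'g" +
  fixes smult :: "'k::comm_ring_1 \<Rightarrow> 'r::ring_1 \<Rightarrow> 'r"
    and E :: "'g \<Rightarrow> 'r set" and one :: "'g \<Rightarrow> 'r" and \<beta> :: "'g \<Rightarrow> 'r \<Rightarrow> 'r"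
  assumes finite_G: "finite G"
    and action: "unital_action G mult ginv smult E one \<beta>"
begin

lemma E_tgt: "g \<in> G \<Longrightarrow> E g = E (tgt g)"
  using action unfolding unital_action_def by blast

lemma E_ideal: "g \<in> G \<Longrightarrow> two_sided_ideal (E g)"
  using action unfolding unital_action_def by blast

lemma E_unital: "g \<in> G \<Longrightarrow> unital_with (E g) (one g)"
  using action unfolding unital_action_def by blast

lemma beta_iso: "g \<in> G \<Longrightarrow> kalg_iso smult (\<beta> g) (E (ginv g)) (E g)"
  using action unfolding unital_action_def by blast

lemma beta_ident: "e \<in> G0 \<Longrightarrow> a \<in> E e \<Longrightarrow> \<beta> e a = a"
  using action unfolding unital_action_def by blast

lemma beta_beta:
  "g \<in> G \<Longrightarrow> h \<in> G \<Longrightarrow> src g = tgt h \<Longrightarrow> a \<in> E (ginv h) \<Longrightarrow> \<beta> g (\<beta> h a) = \<beta> (mult g h) a"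
  using action unfolding unital_action_def by blast

lemma E_decomposition:
  "\<exists>!f. (\<forall>e\<in>G0. f e \<in> E e) \<and> (\<forall>e. e \<notin> G0 \<longrightarrow> f e = 0) \<and> a = sum f G0"
  using action unfolding unital_action_def by blast

lemma finite_idents: "finite G0"
  using finite_G by (simp add: gidents_def)

lemma zero_mem_E: "g \<in> G \<Longrightarrow> 0 \<in> E g"
  using E_ideal unfolding two_sided_ideal_def by blast

lemma add_mem_E: "g \<in> G \<Longrightarrow> a \<in> E g \<Longrightarrow> b \<in> E g \<Longrightarrow> a + b \<in> E g"
  using E_ideal unfolding two_sided_ideal_def by blast

lemma mult_left_mem_E: "g \<in> G \<Longrightarrow> a \<in> E g \<Longrightarrow> c * a \<in> E g"
  using E_ideal unfolding two_sided_ideal_def by blast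

lemma mult_right_mem_E: "g \<in> G \<Longrightarrow> a \<in> E g \<Longrightarrow> a * c \<in> E g"
  using E_ideal unfolding two_sided_ideal_def by blast

lemma sum_mem_E:
  assumes "g \<in> G" shows "finite A \<Longrightarrow> (\<And>i. i \<in> A \<Longrightarrow> f i \<in> E g) \<Longrightarrow> sum f A \<in> E g"
  by (induction A rule: finite_induct) (auto intro: add_mem_E zero_mem_E assms)

lemma one_mem_E: "g \<in> G \<Longrightarrow> one g \<in> E g"
  using E_unital unfolding unital_with_def by blast

lemma one_mult_E: "g \<in> G \<Longrightarrow> a \<in> E g \<Longrightarrow> one g * a = a"
  using E_unital unfolding unital_with_def by blast

lemma mult_one_E: "g \<in> G \<Longrightarrow> a \<in> E g \<Longrightarrow> a * one g = a"
  using E_unital unfolding unital_with_def by blast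

lemma mult_one_mem_E: "g \<in> G \<Longrightarrow> a * one g \<in> E g"
  using mult_left_mem_E one_mem_E by blast

text \<open>Both \<open>1_g a\<close> and \<open>a 1_g\<close> lie in the ideal \<open>E_g\<close>, whose identity is \<open>1_g\<close>.\<close>
lemma one_commute: assumes g: "g \<in> G" shows "one g * a = a * one g"
proof -
  have "one g * (a * one g) = a * one g"
    by (rule one_mult_E[OF g mult_left_mem_E[OF g one_mem_E[OF g]]])
  moreover have "(one g * a) * one g = one g * a"
    by (rule mult_one_E[OF g mult_right_mem_E[OF g one_mem_E[OF g]]])
  ultimately show ?thesis by (simp add: mult.assoc)
qed

lemma one_tgt: assumes g: "g \<in> G" shows "one (tgt g) = one g"
proof -
  have t: "tgt g \<in> G" using tgt_closed g .
  have "one (tgt g) * one g = one g" using one_mult_E[OF t] one_mem_E[OF g] E_tgt[OF g] by simp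
  moreover have "one (tgt g) * one g = one (tgt g)"
    using mult_one_E[OF g] one_mem_E[OF t] E_tgt[OF g] by simp
  ultimately show ?thesis by simp
qed

lemma one_inv: "g \<in> G \<Longrightarrow> one (ginv g) = one (src g)"
  by (metis inv_closed one_tgt tgt_inv)

lemma E_idents_disjoint:
  assumes e1: "e1 \<in> G0" and e2: "e2 \<in> G0" and "e1 \<noteq> e2" and z1: "z \<in> E e1" and z2: "z \<in> E e2"
  shows "z = 0"
proof -
  define f1 where "f1 = (\<lambda>e. if e = e1 then z else 0)"
  define f2 where "f2 = (\<lambda>e. if e = e2 then z else 0)"
  have "(\<forall>e\<in>G0. f1 e \<in> E e) \<and> (\<forall>e. e \<notin> G0 \<longrightarrow> f1 e = 0) \<and> z = sum f1 G0"
    using z1 e1 finite_idents zero_mem_E idents_subset unfolding f1_def by (auto simp: sum.delta)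
  moreover have "(\<forall>e\<in>G0. f2 e \<in> E e) \<and> (\<forall>e. e \<notin> G0 \<longrightarrow> f2 e = 0) \<and> z = sum f2 G0"
    using z2 e2 finite_idents zero_mem_E idents_subset unfolding f2_def by (auto simp: sum.delta)
  ultimately have "f1 = f2" using E_decomposition[of z] by blast
  then have "f1 e1 = f2 e1" by simp
  then show ?thesis using \<open>e1 \<noteq> e2\<close> unfolding f1_def f2_def by simp
qed

lemma mult_E_orthogonal:
  assumes g: "g \<in> G" and k: "k \<in> G" and "tgt g \<noteq> tgt k" and a: "a \<in> E g" and b: "b \<in> E k"
  shows "a * b = 0"
proof -
  have "a * b \<in> E (tgt g)" using mult_right_mem_E[OF g a] E_tgt[OF g] by simp
  moreover have "a * b \<in> E (tgt k)" using mult_left_mem_E[OF k b] E_tgt[OF k] by simp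
  ultimately show ?thesis using E_idents_disjoint tgt_in_idents g k assms(3) by blast
qed

lemma sum_mult_one_idents: "(\<Sum>e\<in>G0. a * one e) = a"
proof -
  obtain f where f: "\<forall>e\<in>G0. f e \<in> E e" "a = sum f G0" using E_decomposition[of a] by blast
  have "a * one e = f e" if e: "e \<in> G0" for e
  proof -
    have eG: "e \<in> G" using e idents_subset by blast
    have "f e' * one e = (if e' = e then f e else 0)" if e': "e' \<in> G0" for e'
    proof (cases "e' = e")
      case True thus ?thesis using mult_one_E[OF eG] f(1) e by simp
    next
      case False
      then have "tgt e' \<noteq> tgt e" using tgt_ident e e' by simp
      with False show ?thesis
        using mult_E_orthogonal[OF _ eG _ f(1)[rule_format, OF e'] one_mem_E[OF eG]] e' idents_subset
        by auto
    qed
    then have "a * one e = (\<Sum>e'\<in>G0. if e' = e then f e else 0)"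
      using f(2) by (simp add: sum_distrib_right)
    also have "\<dots> = f e" using e finite_idents by (simp add: sum.delta')
    finally show ?thesis .
  qed
  then show ?thesis using f(2) by simp
qed

lemma beta_mem_E: "g \<in> G \<Longrightarrow> a \<in> E (ginv g) \<Longrightarrow> \<beta> g a \<in> E g"
  using beta_iso unfolding kalg_iso_def bij_betw_def by blast

lemma beta_add:
  "g \<in> G \<Longrightarrow> a \<in> E (ginv g) \<Longrightarrow> b \<in> E (ginv g) \<Longrightarrow> \<beta> g (a + b) = \<beta> g a + \<beta> g b"
  using beta_iso unfolding kalg_iso_def by blast

lemma beta_mult:
  "g \<in> G \<Longrightarrow> a \<in> E (ginv g) \<Longrightarrow> b \<in> E (ginv g) \<Longrightarrow> \<beta> g (a * b) = \<beta> g a * \<beta> g b"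
  using beta_iso unfolding kalg_iso_def by blast

lemma beta_inj:
  "g \<in> G \<Longrightarrow> a \<in> E (ginv g) \<Longrightarrow> b \<in> E (ginv g) \<Longrightarrow> \<beta> g a = \<beta> g b \<Longrightarrow> a = b"
  using beta_iso unfolding kalg_iso_def bij_betw_def inj_on_def by blast

lemma beta_surj: "g \<in> G \<Longrightarrow> b \<in> E g \<Longrightarrow> \<exists>a\<in>E (ginv g). \<beta> g a = b"
  using beta_iso unfolding kalg_iso_def bij_betw_def by (metis imageE)

lemma beta_zero: assumes g: "g \<in> G" shows "\<beta> g 0 = 0"
proof -
  have "0 \<in> E (ginv g)" using zero_mem_E inv_closed g by blast
  from beta_add[OF g this this] show ?thesis by simp
qed

lemma beta_one: assumes g: "g \<in> G" shows "\<beta> g (one (ginv g)) = one g"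
proof -
  have gi: "ginv g \<in> G" using inv_closed g .
  obtain a where a: "a \<in> E (ginv g)" "\<beta> g a = one g" using beta_surj[OF g one_mem_E[OF g]] by blast
  have "\<beta> g (one (ginv g)) = \<beta> g (one (ginv g)) * one g"
    using mult_one_E[OF g beta_mem_E[OF g one_mem_E[OF gi]]] by simp
  also have "\<dots> = \<beta> g (one (ginv g) * a)" using beta_mult[OF g one_mem_E[OF gi] a(1)] a(2) by simp
  also have "\<dots> = one g" using one_mult_E[OF gi a(1)] a(2) by simp
  finally show ?thesis .
qed

lemma beta_sum:
  assumes g: "g \<in> G"
  shows "finite A \<Longrightarrow> (\<And>i. i \<in> A \<Longrightarrow> f i \<in> E (ginv g)) \<Longrightarrow> \<beta> g (sum f A) = (\<Sum>i\<in>A. \<beta> g (f i))"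
proof (induction A rule: finite_induct)
  case empty thus ?case using beta_zero[OF g] by simp
next
  case (insert a A)
  have "sum f A \<in> E (ginv g)" using sum_mem_E[OF inv_closed[OF g]] insert by auto
  thus ?case using insert beta_add[OF g] by simp
qed

lemma beta_inv_beta: assumes g: "g \<in> G" and a: "a \<in> E (ginv g)" shows "\<beta> (ginv g) (\<beta> g a) = a"
proof -
  have gi: "ginv g \<in> G" using inv_closed g .
  have "\<beta> (ginv g) (\<beta> g a) = \<beta> (src g) a"
    using beta_beta[OF gi g _ a] src_inv[OF g] by (simp add: gdom_def)
  also have "\<dots> = a"
    using beta_ident src_in_idents[OF g] a E_tgt[OF gi] tgt_inv[OF g] by simp
  finally show ?thesis .
qed

lemma one_idem: "g \<in> G \<Longrightarrow> one g * one g = one g"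
  using one_mult_E one_mem_E by blast

lemma mult_one_mult_one: "g \<in> G \<Longrightarrow> (a * one g) * (b * one g) = a * b * one g"
  by (metis mult.assoc one_commute one_idem)

lemma beta_mult_one:
  assumes g: "g \<in> G"
  shows "\<beta> g (a * b * one (ginv g)) = \<beta> g (a * one (ginv g)) * \<beta> g (b * one (ginv g))"
proof -
  have gi: "ginv g \<in> G" using inv_closed g .
  show ?thesis
    using beta_mult[OF g mult_one_mem_E[OF gi] mult_one_mem_E[OF gi]] mult_one_mult_one[OF gi] by simp
qed

definition trace :: "'g set \<Rightarrow> 'r \<Rightarrow> 'r" where
  "trace H a = (\<Sum>h\<in>H. \<beta> h (a * one (ginv h)))"

lemma beta_mult_one_mem_E: "h \<in> G \<Longrightarrow> \<beta> h (a * one (ginv h)) \<in> E h"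
  using beta_mem_E mult_one_mem_E inv_closed by blast

lemma trace_mult_one:
  assumes k: "k \<in> G" and H: "H \<subseteq> G"
  shows "trace H a * one k = (\<Sum>h\<in>{h\<in>H. tgt h = tgt k}. \<beta> h (a * one (ginv h)))"
proof -
  have "\<beta> h (a * one (ginv h)) * one k = (if tgt h = tgt k then \<beta> h (a * one (ginv h)) else 0)"
    if "h \<in> H" for h
  proof -
    have h: "h \<in> G" using that H by blast
    show ?thesis
    proof (cases "tgt h = tgt k")
      case True
      then have "\<beta> h (a * one (ginv h)) \<in> E k"
        using beta_mult_one_mem_E[OF h] E_tgt[OF h] E_tgt[OF k] by simp
      with True show ?thesis using mult_one_E[OF k] by simp
    next
      case False
      then show ?thesis
        using mult_E_orthogonal[OF h k False beta_mult_one_mem_E[OF h] one_mem_E[OF k]] by simp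
    qed
  qed
  then have "trace H a * one k = (\<Sum>h\<in>H. if tgt h = tgt k then \<beta> h (a * one (ginv h)) else 0)"
    unfolding trace_def sum_distrib_right by (rule sum.cong[OF refl])
  also have "\<dots> = (\<Sum>h\<in>{h\<in>H. tgt h = tgt k}. \<beta> h (a * one (ginv h)))"
    using finite_subset[OF H finite_G] by (simp add: sum.inter_filter)
  finally show ?thesis .
qed

lemma beta_trace_summand:
  assumes k: "k \<in> G" and h: "h \<in> G" and "tgt h = src k"
  shows "\<beta> k (\<beta> h (a * one (ginv h))) = \<beta> (mult k h) (a * one (ginv (mult k h)))"
proof -
  have "one (ginv (mult k h)) = one (ginv h)"
    using one_inv[OF h] one_inv[OF mult_closed[OF k h]] src_mult[OF k h] assms(3) by simp
  then show ?thesis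
    using beta_beta[OF k h assms(3)[symmetric] mult_one_mem_E[OF inv_closed[OF h]]] by simp
qed

text \<open>Applying \<open>\<beta>_k\<close> to the part of the trace over arrows ending at the source of k
  permutes it, by left translation, onto the part over arrows ending at the target of k.\<close>
lemma trace_mem_fixring:
  assumes H: "subgroupoid G mult ginv H"
  shows "trace H a \<in> fixring ginv one \<beta> H"
  unfolding fixring_def
proof (intro CollectI ballI)
  fix k assume kH: "k \<in> H"
  have HG: "H \<subseteq> G" using H unfolding subgroupoid_def by blast
  have k: "k \<in> G" and ki: "ginv k \<in> G" using kH HG inv_closed by auto
  define T where "T h = \<beta> h (a * one (ginv h))" for h
  define A where "A = {h\<in>H. tgt h = src k}"
  have finA: "finite A" using finite_subset[OF HG finite_G] unfolding A_def by simp
  have T_mem: "T h \<in> E (ginv k)" if "h \<in> A" for h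
  proof -
    have h: "h \<in> G" and "tgt h = src k" using that HG unfolding A_def by auto
    then show ?thesis
      using beta_mult_one_mem_E[OF h] E_tgt[OF h] E_tgt[OF ki] tgt_inv[OF k] unfolding T_def by simp
  qed
  have "\<beta> k (trace H a * one (ginv k)) = \<beta> k (sum T A)"
    using trace_mult_one[OF ki HG] tgt_inv[OF k] unfolding T_def A_def by simp
  also have "\<dots> = (\<Sum>h\<in>A. \<beta> k (T h))" using beta_sum[OF k finA T_mem] .
  also have "\<dots> = (\<Sum>h\<in>A. T (mult k h))"
    using beta_trace_summand[OF k] HG unfolding A_def T_def by (intro sum.cong) auto
  also have "\<dots> = (\<Sum>l\<in>{l\<in>H. tgt l = tgt k}. T l)"
    using sum.reindex_bij_betw[OF bij_betw_mult_left[OF H kH]] unfolding A_def .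
  also have "\<dots> = trace H a * one k" using trace_mult_one[OF k HG] unfolding T_def by simp
  finally show "\<beta> k (trace H a * one (ginv k)) = trace H a * one k" .
qed

end

locale galois_coordinates = unital_groupoid_action G mult ginv smult E one \<beta>
  for G :: "'g set" and mult :: "'g \<Rightarrow> 'g \<Rightarrow> 'g" and ginv :: "'g \<Rightarrow> 'g"
    and smult :: "'k::comm_ring_1 \<Rightarrow> 'r::ring_1 \<Rightarrow> 'r"
    and E :: "'g \<Rightarrow> 'r set" and one :: "'g \<Rightarrow> 'r" and \<beta> :: "'g \<Rightarrow> 'r \<Rightarrow> 'r" +
  fixes m :: nat and x :: "nat \<Rightarrow> 'r" and y :: "nat \<Rightarrow> 'r"
  assumes coordinates:
    "g \<in> G \<Longrightarrow> (\<Sum>i<m. x i * \<beta> g (y i * one (ginv g))) = (if g \<in> G0 then one g else 0)"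
begin

lemma sum_restrict_idents: "(\<Sum>g\<in>G. if g \<in> G0 then f g else 0) = (\<Sum>g\<in>G0. f g)"
proof -
  have "(\<Sum>g\<in>G. if g \<in> G0 then f g else 0) = sum f (G \<inter> G0)"
    using finite_G by (simp add: sum.inter_restrict)
  also have "G \<inter> G0 = G0" using idents_subset by blast
  finally show ?thesis .
qed

lemma trace_coordinates_left: "(\<Sum>j<m. x j * trace G (y j * a)) = a"
proof -
  have "(\<Sum>j<m. x j * trace G (y j * a)) =
      (\<Sum>j<m. \<Sum>g\<in>G. x j * \<beta> g (y j * one (ginv g)) * \<beta> g (a * one (ginv g)))"
    unfolding trace_def sum_distrib_left
  proof (intro sum.cong refl)
    fix j g assume "g \<in> G"
    then show "x j * \<beta> g (y j * a * one (ginv g)) =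
        x j * \<beta> g (y j * one (ginv g)) * \<beta> g (a * one (ginv g))"
      using beta_mult_one[of g "y j" a] by (simp add: mult.assoc)
  qed
  also have "\<dots> = (\<Sum>g\<in>G. (\<Sum>j<m. x j * \<beta> g (y j * one (ginv g))) * \<beta> g (a * one (ginv g)))"
    by (simp add: sum.swap[of _ G] sum_distrib_right)
  also have "\<dots> = (\<Sum>g\<in>G. if g \<in> G0 then one g * \<beta> g (a * one (ginv g)) else 0)"
    by (rule sum.cong[OF refl]) (simp add: coordinates)
  also have "\<dots> = (\<Sum>g\<in>G0. one g * \<beta> g (a * one (ginv g)))" by (rule sum_restrict_idents)
  also have "\<dots> = (\<Sum>g\<in>G0. a * one g)"
  proof (rule sum.cong[OF refl])
    fix g assume g: "g \<in> G0"
    then have gG: "g \<in> G" using idents_subset by blast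
    show "one g * \<beta> g (a * one (ginv g)) = a * one g"
      using inv_ident[OF g] beta_ident[OF g mult_one_mem_E[OF gG]]
        one_mult_E[OF gG mult_one_mem_E[OF gG]] by simp
  qed
  also have "\<dots> = a" by (rule sum_mult_one_idents)
  finally show ?thesis .
qed

text \<open>The defining identity of the coordinates, transported along \<open>\<beta>_(g\<inverse>)\<close>, gives
  the mirrored identity with the roles of x and y exchanged.\<close>
lemma coordinates_swapped:
  assumes g: "g \<in> G"
  shows "(\<Sum>j<m. \<beta> g (x j * one (ginv g)) * y j) * one g = (if g \<in> G0 then one g else 0)"
proof -
  define g' where "g' = ginv g"
  have g': "g' \<in> G" "ginv g' = g" using inv_closed g unfolding g'_def by auto
  have Eg': "E (ginv g') = E g" using g' by simp
  define S where "S = (\<Sum>j<m. \<beta> g (x j * one g') * (y j * one g))"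
  have S_eq: "(\<Sum>j<m. \<beta> g (x j * one (ginv g)) * y j) * one g = S"
    unfolding S_def g'_def by (simp add: sum_distrib_right mult.assoc)
  have summand_mem: "\<beta> g (x j * one g') * (y j * one g) \<in> E (ginv g')" for j
    using mult_right_mem_E[OF g beta_mult_one_mem_E[OF g]] Eg' unfolding g'_def by simp
  then have S_mem: "S \<in> E (ginv g')" unfolding S_def Eg' by (intro sum_mem_E[OF g]) simp_all
  have "\<beta> g' (\<beta> g (x j * one g') * (y j * one g)) = x j * \<beta> g' (y j * one (ginv g'))" for j
  proof -
    have a: "\<beta> g (x j * one g') \<in> E (ginv g')" using beta_mult_one_mem_E[OF g] Eg' unfolding g'_def by simp
    have b: "y j * one g \<in> E (ginv g')" using mult_one_mem_E[OF g] Eg' by simp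
    have "\<beta> g' (\<beta> g (x j * one g')) = x j * one g'"
      using beta_inv_beta[OF g] mult_one_mem_E[OF g'(1)] unfolding g'_def by simp
    then show ?thesis
      using beta_mult[OF g'(1) a b] one_mult_E[OF g'(1) beta_mem_E[OF g'(1) b]] g'(2)
      by (simp add: mult.assoc)
  qed
  then have "\<beta> g' S = (\<Sum>j<m. x j * \<beta> g' (y j * one (ginv g')))"
    unfolding S_def using beta_sum[OF g'(1) finite_lessThan summand_mem] by simp
  also have "\<dots> = (if g \<in> G0 then \<beta> g' (one g) else \<beta> g' 0)"
    using coordinates[OF g'(1)] inv_in_idents_iff[OF g] beta_one[OF g'(1)] beta_zero[OF g'(1)]
      inv_ident g'(2) unfolding g'_def by auto
  finally have "S = (if g \<in> G0 then one g else 0)"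
    using beta_inj[OF g'(1) S_mem] one_mem_E[OF g] zero_mem_E[OF g] Eg' by (auto split: if_splits)
  then show ?thesis using S_eq by simp
qed

lemma trace_coordinates_right: "(\<Sum>j<m. trace G (a * x j) * y j) = a"
proof -
  have "(\<Sum>j<m. trace G (a * x j) * y j) =
      (\<Sum>j<m. \<Sum>g\<in>G. \<beta> g (a * one (ginv g)) * \<beta> g (x j * one (ginv g)) * y j)"
    unfolding trace_def by (simp add: sum_distrib_right beta_mult_one)
  also have "\<dots> = (\<Sum>g\<in>G. \<beta> g (a * one (ginv g)) * (\<Sum>j<m. \<beta> g (x j * one (ginv g)) * y j))"
    by (simp add: sum.swap[of _ G] sum_distrib_left mult.assoc)
  also have "\<dots> = (\<Sum>g\<in>G. if g \<in> G0 then \<beta> g (a * one (ginv g)) * one g else 0)"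
  proof (rule sum.cong[OF refl])
    fix g assume g: "g \<in> G"
    let ?b = "\<beta> g (a * one (ginv g))" and ?S = "\<Sum>j<m. \<beta> g (x j * one (ginv g)) * y j"
    have "?b * ?S = ?b * one g * ?S" using mult_one_E[OF g beta_mult_one_mem_E[OF g]] by simp
    also have "\<dots> = ?b * (?S * one g)" by (simp add: mult.assoc one_commute[OF g])
    finally show "?b * ?S = (if g \<in> G0 then ?b * one g else 0)"
      using coordinates_swapped[OF g] by simp
  qed
  also have "\<dots> = (\<Sum>g\<in>G0. \<beta> g (a * one (ginv g)) * one g)" by (rule sum_restrict_idents)
  also have "\<dots> = (\<Sum>g\<in>G0. a * one g)"
  proof (rule sum.cong[OF refl])
    fix g assume g: "g \<in> G0"
    then have gG: "g \<in> G" using idents_subset by blast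
    show "\<beta> g (a * one (ginv g)) * one g = a * one g"
      using inv_ident[OF g] beta_ident[OF g mult_one_mem_E[OF gG]]
        mult_one_E[OF gG mult_one_mem_E[OF gG]] by simp
  qed
  also have "\<dots> = a" by (rule sum_mult_one_idents)
  finally show ?thesis .
qed

lemma coordinates_trace_wide:
  assumes H: "wide_subgroupoid G mult ginv H"
  shows "(\<Sum>j<m. x j * trace H (y j)) = 1"
proof -
  have HG: "H \<subseteq> G" and G0H: "G0 \<subseteq> H"
    using H unfolding wide_subgroupoid_def subgroupoid_def by blast+
  have "(\<Sum>j<m. x j * trace H (y j)) = (\<Sum>h\<in>H. \<Sum>j<m. x j * \<beta> h (y j * one (ginv h)))"
    unfolding trace_def by (simp add: sum_distrib_left sum.swap[of _ H])
  also have "\<dots> = (\<Sum>h\<in>H. if h \<in> G0 then one h else 0)"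
    by (rule sum.cong[OF refl]) (use HG coordinates in blast)
  also have "\<dots> = sum one (H \<inter> G0)"
    using finite_subset[OF HG finite_G] by (simp add: sum.inter_restrict)
  also have "\<dots> = (\<Sum>e\<in>G0. 1 * one e)" using G0H by (simp add: Int_absorb1)
  also have "\<dots> = 1" by (rule sum_mult_one_idents)
  finally show ?thesis .
qed

lemma beta_expansion:
  assumes h: "h \<in> G"
  shows "\<beta> h (a * one (ginv h)) = (\<Sum>k<m. trace G (a * x k) * \<beta> h (y k * one (ginv h)))"
proof -
  have "a * one (ginv h) = (\<Sum>k<m. trace G (a * x k) * y k * one (ginv h))"
    by (subst (1) trace_coordinates_right[symmetric, of a]) (simp add: sum_distrib_right)
  then have "\<beta> h (a * one (ginv h)) = (\<Sum>k<m. \<beta> h (trace G (a * x k) * y k * one (ginv h)))"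
    using beta_sum[OF h finite_lessThan] mult_one_mem_E[OF inv_closed[OF h]] by simp
  also have "\<dots> = (\<Sum>k<m. trace G (a * x k) * \<beta> h (y k * one (ginv h)))"
  proof (rule sum.cong[OF refl])
    fix k
    let ?t = "trace G (a * x k)"
    have "\<beta> h (?t * one (ginv h)) = ?t * one h"
      using trace_mem_fixring[OF subgroupoid_carrier] h unfolding fixring_def by blast
    then show "\<beta> h (?t * y k * one (ginv h)) = ?t * \<beta> h (y k * one (ginv h))"
      using beta_mult_one[OF h] one_mult_E[OF h beta_mult_one_mem_E[OF h]] by (simp add: mult.assoc)
  qed
  finally show ?thesis .
qed

text \<open>The component in \<open>J_h\<close> of an element v of the centralizer of \<open>R^\<beta>\<close>.\<close>
definition Jcomponent :: "'r \<Rightarrow> 'g \<Rightarrow> 'r" where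
  "Jcomponent v h = (\<Sum>j<m. x j * v * \<beta> h (y j * one (ginv h)))"

lemma Jcomponent_mem_Jset:
  assumes v: "v \<in> centralizer (fixring ginv one \<beta> G)" and h: "h \<in> G"
  shows "Jcomponent v h \<in> Jset ginv E one \<beta> h"
proof -
  let ?b = "\<lambda>a. \<beta> h (a * one (ginv h))"
  have v_trace: "v * trace G a = trace G a * v" for a
    using v trace_mem_fixring[OF subgroupoid_carrier] unfolding centralizer_def by blast
  have "Jcomponent v h \<in> E h"
    unfolding Jcomponent_def using h beta_mult_one_mem_E mult_left_mem_E
    by (intro sum_mem_E) auto
  moreover have "Jcomponent v h * ?b z = z * Jcomponent v h" for z
  proof -
    have "Jcomponent v h * ?b z = (\<Sum>j<m. x j * v * ?b (y j * z))"
      unfolding Jcomponent_def sum_distrib_right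
      using beta_mult_one[OF h] by (intro sum.cong refl) (simp add: mult.assoc)
    also have "\<dots> = (\<Sum>j<m. \<Sum>k<m. x j * trace G (y j * (z * x k)) * (v * ?b (y k)))"
    proof (rule sum.cong[OF refl])
      fix j
      have "x j * v * ?b (y j * z) = (\<Sum>k<m. x j * (v * trace G (y j * z * x k)) * ?b (y k))"
        unfolding beta_expansion[OF h, of "y j * z"] by (simp add: sum_distrib_left mult.assoc)
      also have "\<dots> = (\<Sum>k<m. x j * trace G (y j * (z * x k)) * (v * ?b (y k)))"
        by (simp only: v_trace mult.assoc)
      finally show "x j * v * ?b (y j * z) = \<dots>" .
    qed
    also have "\<dots> = (\<Sum>k<m. (\<Sum>j<m. x j * trace G (y j * (z * x k))) * (v * ?b (y k)))"
      by (subst sum.swap) (simp add: sum_distrib_right)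
    also have "\<dots> = z * Jcomponent v h"
      unfolding trace_coordinates_left Jcomponent_def by (simp add: sum_distrib_left mult.assoc)
    finally show ?thesis .
  qed
  ultimately show ?thesis unfolding Jset_def by simp
qed

lemma sum_Jcomponent:
  assumes H: "wide_subgroupoid G mult ginv H" and v: "v \<in> centralizer (fixring ginv one \<beta> H)"
  shows "(\<Sum>h\<in>H. Jcomponent v h) = v"
proof -
  have Hs: "subgroupoid G mult ginv H" using H unfolding wide_subgroupoid_def by blast
  have "(\<Sum>h\<in>H. Jcomponent v h) = (\<Sum>j<m. x j * v * trace H (y j))"
    unfolding Jcomponent_def trace_def by (simp add: sum.swap[of _ H] sum_distrib_left mult.assoc)
  also have "\<dots> = (\<Sum>j<m. x j * trace H (y j) * v)"
  proof (rule sum.cong[OF refl])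
    fix j
    have "v * trace H (y j) = trace H (y j) * v"
      using v trace_mem_fixring[OF Hs] unfolding centralizer_def by blast
    then show "x j * v * trace H (y j) = x j * trace H (y j) * v" by (simp add: mult.assoc)
  qed
  also have "\<dots> = (\<Sum>j<m. x j * trace H (y j)) * v" by (simp add: sum_distrib_right)
  also have "\<dots> = v" using coordinates_trace_wide[OF H] by simp
  finally show ?thesis .
qed

lemma centralizer_fixring_subset_gammaJ:
  assumes H: "wide_subgroupoid G mult ginv H"
  shows "centralizer (fixring ginv one \<beta> H) \<subseteq> gammaJ ginv E one \<beta> H"
proof
  fix v assume v: "v \<in> centralizer (fixring ginv one \<beta> H)"
  have HG: "H \<subseteq> G" using H unfolding wide_subgroupoid_def subgroupoid_def by blast
  then have "fixring ginv one \<beta> G \<subseteq> fixring ginv one \<beta> H" unfolding fixring_def by blast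
  then have "v \<in> centralizer (fixring ginv one \<beta> G)" using v unfolding centralizer_def by blast
  then have "\<forall>h\<in>H. Jcomponent v h \<in> Jset ginv E one \<beta> h" using Jcomponent_mem_Jset HG by blast
  with sum_Jcomponent[OF H v] show "v \<in> gammaJ ginv E one \<beta> H"
    unfolding gammaJ_def by force
qed

lemma Jset_commute_fixring:
  assumes h: "h \<in> G" and "h \<in> H" and w: "w \<in> Jset ginv E one \<beta> h" and s: "s \<in> fixring ginv one \<beta> H"
  shows "w * s = s * w"
proof -
  have wE: "w \<in> E h" and wJ: "w * \<beta> h (s * one (ginv h)) = s * w"
    using w unfolding Jset_def by blast+
  have "\<beta> h (s * one (ginv h)) = s * one h" using s \<open>h \<in> H\<close> unfolding fixring_def by blast
  then have "s * w = w * one h * s" using wJ by (simp add: mult.assoc one_commute[OF h])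
  also have "\<dots> = w * s" using mult_one_E[OF h wE] by simp
  finally show ?thesis by simp
qed

lemma gammaJ_subset_centralizer_fixring:
  assumes HG: "H \<subseteq> G"
  shows "gammaJ ginv E one \<beta> H \<subseteq> centralizer (fixring ginv one \<beta> H)"
proof
  fix w assume "w \<in> gammaJ ginv E one \<beta> H"
  then obtain f where w: "w = sum f H" and f: "\<And>h. h \<in> H \<Longrightarrow> f h \<in> Jset ginv E one \<beta> h"
    unfolding gammaJ_def by blast
  have "w * s = s * w" if "s \<in> fixring ginv one \<beta> H" for s
    using Jset_commute_fixring[OF _ _ f that] HG unfolding w sum_distrib_left sum_distrib_right
    by (intro sum.cong) auto
  then show "w \<in> centralizer (fixring ginv one \<beta> H)" unfolding centralizer_def by blast
qed

lemma centralizer_fixring_eq_gammaJ: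
  assumes H: "wide_subgroupoid G mult ginv H"
  shows "centralizer (fixring ginv one \<beta> H) = gammaJ ginv E one \<beta> H"
  using centralizer_fixring_subset_gammaJ[OF H] gammaJ_subset_centralizer_fixring H
  unfolding wide_subgroupoid_def subgroupoid_def by blast

end

lemma inj_on_iff_inj_on_if_determined:
  assumes "\<And>a. a \<in> A \<Longrightarrow> g a = \<phi> (f a)" and "\<And>a. a \<in> A \<Longrightarrow> f a = \<psi> (g a)"
  shows "inj_on f A \<longleftrightarrow> inj_on g A"
  using assms unfolding inj_on_def by metis

theorem theorem3p9:
  fixes G :: "'g set" and mult :: "'g \<Rightarrow> 'g \<Rightarrow> 'g" and ginv :: "'g \<Rightarrow> 'g"
    and smult :: "'k::comm_ring_1 \<Rightarrow> 'r::ring_1 \<Rightarrow> 'r"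
    and E :: "'g \<Rightarrow> 'r set" and one :: "'g \<Rightarrow> 'r" and \<beta> :: "'g \<Rightarrow> 'r \<Rightarrow> 'r"
  assumes "kalgebra smult"
    and "groupoid G mult ginv" and "finite G"
    and "unital_action G mult ginv smult E one \<beta>"
    and "galois_ext G mult ginv one \<beta>"
    and "\<forall>H. wide_subgroupoid G mult ginv H \<longrightarrow>
           centralizer (centralizer (fixring ginv one \<beta> H)) = fixring ginv one \<beta> H"
  shows "inj_on (fixring ginv one \<beta>) {H. wide_subgroupoid G mult ginv H}
     \<longleftrightarrow> inj_on (gammaJ ginv E one \<beta>) {H. wide_subgroupoid G mult ginv H}"
proof -
  obtain m :: nat and x y :: "nat \<Rightarrow> 'r" where "\<forall>g\<in>G. (\<Sum>i<m. x i * \<beta> g (y i * one (ginv g))) =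
      (if g \<in> gidents G mult ginv then one g else 0)"
    using assms(5) unfolding galois_ext_def by blast
  then interpret galois_coordinates G mult ginv smult E one \<beta> m x y
    using assms(2-4) by unfold_locales auto
  have gamma: "gammaJ ginv E one \<beta> H = centralizer (fixring ginv one \<beta> H)"
    if "H \<in> {H. wide_subgroupoid G mult ginv H}" for H
    using centralizer_fixring_eq_gammaJ that by simp
  moreover have "fixring ginv one \<beta> H = centralizer (gammaJ ginv E one \<beta> H)"
    if "H \<in> {H. wide_subgroupoid G mult ginv H}" for H
    using assms(6) gamma[OF that] that by simp
  ultimately show ?thesis by (rule inj_on_iff_inj_on_if_determined)
qed

end
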